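(* Let $f,g\in\mathbb{C}[X,Y]$ be quasi-convenient polynomials of positive degree. Then (1) $\nu_\infty(f,g)\ge 0$; (2) $\nu_\infty(f,g)=0$ if and only if $\Delta_\infty(f)$ and $\Delta_\infty(g)$ are both segments contained in one and the same straight line passing through the origin.
   Context: Write $f=\sum c_{\alpha\beta}X^\alpha Y^\beta\in\mathbb{C}[X,Y]$ and $\operatorname{supp} f=\{(\alpha,\beta)\in\mathbb{N}^2: c_{\alpha\beta}\neq 0\}$. A nonzero polynomial $f$ of positive degree is quasi-convenient if $c_{\alpha 0}\neq 0$ and $c_{0\beta}\neq 0$ for some integers $\alpha,\beta\ge 0$. The Newton diagram at infinity of $f$ is $\Delta_\infty(f)=\operatorname{conv}(\{(0,0)\}\cup\operatorname{supp} f)\subset\mathbb{R}^2$. For quasi-convenient $f,g$ define $\nu_\infty(f,g)=\operatorname{Area}\Delta_\infty(fg)-\operatorname{Area}\Delta_\infty(f)-\operatorname{Area}\Delta_\infty(g)$, where Area denotes two-dimensional Lebesgue measure. *)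

theory Defs
  imports "HOL-Analysis.Analysis" "HOL-Computational_Algebra.Polynomial"
begin

text \<open>A polynomial in C[X,Y] is represented as a polynomial in Y whose coefficients
are polynomials in X: the coefficient of X^a Y^b in f is coeff (coeff f b) a.\<close>

type_synonym cpoly2 = "complex poly poly"

definition cf2 :: "cpoly2 \<Rightarrow> nat \<Rightarrow> nat \<Rightarrow> complex" where
  "cf2 f a b = coeff (coeff f b) a"

definition supp2 :: "cpoly2 \<Rightarrow> (nat \<times> nat) set" where
  "supp2 f = {(a, b). cf2 f a b \<noteq> 0}"

definition pos_degree2 :: "cpoly2 \<Rightarrow> bool" where
  "pos_degree2 f \<longleftrightarrow> (\<exists>(a, b) \<in> supp2 f. a + b > 0)"

definition quasi_convenient :: "cpoly2 \<Rightarrow> bool" where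
  "quasi_convenient f \<longleftrightarrow> f \<noteq> 0 \<and> pos_degree2 f \<and>
     (\<exists>a. cf2 f a 0 \<noteq> 0) \<and> (\<exists>b. cf2 f 0 b \<noteq> 0)"

definition newton_inf :: "cpoly2 \<Rightarrow> (real \<times> real) set" where
  "newton_inf f = convex hull (insert (0, 0) ((\<lambda>(a, b). (real a, real b)) ` supp2 f))"

definition area :: "(real \<times> real) set \<Rightarrow> real" where
  "area S = measure lborel S"

definition nu_inf :: "cpoly2 \<Rightarrow> cpoly2 \<Rightarrow> real" where
  "nu_inf f g = area (newton_inf (f * g)) - area (newton_inf f) - area (newton_inf g)"

end

theory Submission
  imports Defs
begin

text \<open>The Newton diagram at infinity of a product of quasi-convenient polynomials is the
  Minkowski sum of the diagrams of the factors. A sum of exponents of \<open>f\<close> and \<open>g\<close> lying outside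
  \<open>\<Delta>\<^sub>\<infinity>(f g)\<close> would be cut off by a linear form, and the monomials of \<open>f\<close> and \<open>g\<close> extremal
  for that form (ties broken lexicographically) multiply to a monomial of \<open>f g\<close> that cannot cancel;
  the pure powers of \<open>X\<close> and \<open>Y\<close> in \<open>g\<close> put the support of \<open>f\<close> itself into \<open>\<Delta>\<^sub>\<infinity>(f g)\<close>.

  Hence \<open>\<nu>\<^sub>\<infinity>(f, g) = |A + B| - |A| - |B|\<close> for compact convex \<open>A, B\<close> in the plane containing
  the origin. Slicing vertically and applying the one-dimensional Brunn--Minkowski inequality
  slice by slice shows \<open>|A + B| > |A| + |B|\<close> as soon as \<open>A\<close> has positive area and \<open>B\<close> is not a
  point. Equality therefore forces \<open>A\<close>, \<open>B\<close> and \<open>A + B\<close> to be null convex sets, that is,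
  segments on a common line through the origin.\<close>

section \<open>Newton diagrams at infinity of products\<close>

lemma cf2_mult:
  "cf2 (f * g) m n = (\<Sum>(i, j)\<in>{..m} \<times> {..n}. cf2 f i j * cf2 g (m - i) (n - j))"
  by (simp add: cf2_def coeff_mult coeff_sum sum.cartesian_product' sum.swap[of _ "{..n}"])

lemma finite_supp2: "finite (supp2 f)"
proof -
  define K where "K = (\<Sum>b\<le>degree f. degree (coeff f b))"
  have "supp2 f \<subseteq> {..K} \<times> {..degree f}"
  proof clarify
    fix a b assume ab: "(a, b) \<in> supp2 f"
    hence "coeff f b \<noteq> 0" by (auto simp: supp2_def cf2_def)
    hence b: "b \<le> degree f" by (rule le_degree)
    have "a \<le> degree (coeff f b)" using ab by (auto simp: supp2_def cf2_def intro: le_degree)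
    also have "\<dots> \<le> K" unfolding K_def using b by (intro member_le_sum) auto
    finally show "a \<in> {..K} \<and> b \<in> {..degree f}" using b by simp
  qed
  thus ?thesis by (rule finite_subset) auto
qed

lemma supp2_mult_subset:
  assumes "(m, n) \<in> supp2 (f * g)"
  obtains i j where "i \<le> m" "j \<le> n" "(i, j) \<in> supp2 f" "(m - i, n - j) \<in> supp2 g"
proof -
  have "(\<Sum>(i, j)\<in>{..m} \<times> {..n}. cf2 f i j * cf2 g (m - i) (n - j)) \<noteq> 0"
    using assms by (simp add: supp2_def cf2_mult)
  then obtain i j where "(i, j) \<in> {..m} \<times> {..n}" "cf2 f i j * cf2 g (m - i) (n - j) \<noteq> 0"
    by (metis (no_types, lifting) case_prod_conv surj_pair sum.neutral)
  thus thesis using that by (auto simp: supp2_def)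
qed

definition lex_top :: "(nat \<times> nat \<Rightarrow> real) \<Rightarrow> (nat \<times> nat) set \<Rightarrow> nat \<times> nat \<Rightarrow> bool" where
  "lex_top W S t \<longleftrightarrow> t \<in> S \<and> (\<forall>x\<in>S. W x \<le> W t \<and>
     (W x = W t \<longrightarrow> fst x \<le> fst t \<and> (fst x = fst t \<longrightarrow> snd x \<le> snd t)))"

lemma lex_top_exists:
  assumes "finite S" "S \<noteq> {}"
  obtains t where "lex_top W S t"
proof -
  define S1 where "S1 = {x\<in>S. W x = Max (W ` S)}"
  define S2 where "S2 = {x\<in>S1. fst x = Max (fst ` S1)}"
  define t where "t = (Max (fst ` S1), Max (snd ` S2))"
  have "S1 \<noteq> {}" using Max_in[of "W ` S"] assms unfolding S1_def by fastforce
  hence "S2 \<noteq> {}" using Max_in[of "fst ` S1"] assms unfolding S1_def S2_def by fastforce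
  hence "t \<in> S2" using Max_in[of "snd ` S2"] assms unfolding t_def S1_def S2_def
    by (fastforce simp: prod_eq_iff)
  moreover have "finite S1" "finite S2" using assms by (auto simp: S1_def S2_def)
  ultimately have "lex_top W S t"
    using assms unfolding lex_top_def by (auto simp: S1_def S2_def t_def)
  thus thesis by (rule that)
qed

lemma lex_top_sum_in_supp2_mult:
  assumes W: "\<And>x y. W (fst x + fst y, snd x + snd y) = W x + W y"
    and s: "lex_top W (supp2 f) s" and t: "lex_top W (supp2 g) t"
  shows "(fst s + fst t, snd s + snd t) \<in> supp2 (f * g)"
proof -
  define m where "m = fst s + fst t"
  define n where "n = snd s + snd t"
  have only_s: "(i, j) = s"
    if ij: "i \<le> m" "j \<le> n" "(i, j) \<in> supp2 f" "(m - i, n - j) \<in> supp2 g" for i j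
  proof -
    have "W (i, j) + W (m - i, n - j) = W s + W t"
      using W[of "(i, j)" "(m - i, n - j)"] W[of s t] ij(1,2) by (simp add: m_def n_def)
    moreover have "W (i, j) \<le> W s" "W (m - i, n - j) \<le> W t"
      using s t ij(3,4) by (auto simp: lex_top_def)
    ultimately have "W (i, j) = W s" "W (m - i, n - j) = W t" by linarith+
    hence "i \<le> fst s" "m - i \<le> fst t" using s t ij(3,4) by (auto simp: lex_top_def)
    hence i: "i = fst s" using ij(1) by (simp add: m_def)
    hence "j \<le> snd s" "n - j \<le> snd t"
      using s t ij(3,4) \<open>W (i, j) = W s\<close> \<open>W (m - i, n - j) = W t\<close>
      by (auto simp: lex_top_def m_def)
    thus ?thesis using i ij(2) by (simp add: n_def prod_eq_iff)
  qed
  have "s \<in> {..m} \<times> {..n}" by (simp add: m_def n_def mem_Times_iff)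
  hence "cf2 (f * g) m n = (\<Sum>(i, j)\<in>{s}. cf2 f i j * cf2 g (m - i) (n - j))"
    unfolding cf2_mult
  proof (intro sum.mono_neutral_right ballI)
    fix x assume "x \<in> {..m} \<times> {..n} - {s}"
    then obtain i j where "x = (i, j)" "i \<le> m" "j \<le> n" "(i, j) \<noteq> s" by auto
    thus "(case x of (i, j) \<Rightarrow> cf2 f i j * cf2 g (m - i) (n - j)) = 0"
      using only_s[of i j] by (auto simp: supp2_def)
  qed auto
  also have "\<dots> = cf2 f (fst s) (snd s) * cf2 g (fst t) (snd t)"
    by (simp add: m_def n_def split: prod.splits)
  also have "\<dots> \<noteq> 0" using s t by (auto simp: lex_top_def supp2_def)
  finally show ?thesis by (simp add: supp2_def m_def n_def)
qed

definition real_point :: "nat \<times> nat \<Rightarrow> real \<times> real" where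
  "real_point x = (real (fst x), real (snd x))"

lemma real_point_add: "real_point (fst x + fst y, snd x + snd y) = real_point x + real_point y"
  by (simp add: real_point_def)

lemma newton_inf_eq: "newton_inf f = convex hull (insert 0 (real_point ` supp2 f))"
proof -
  have "(\<lambda>(a, b). (real a, real b)) = real_point" by (auto simp: real_point_def)
  thus ?thesis by (simp add: newton_inf_def zero_prod_def)
qed

lemma compact_newton_inf: "compact (newton_inf f)"
  by (simp add: newton_inf_eq finite_supp2 finite_imp_compact_convex_hull)

lemma convex_newton_inf: "convex (newton_inf f)"
  by (simp add: newton_inf_eq)

lemma zero_in_newton_inf: "0 \<in> newton_inf f"
  by (simp add: newton_inf_eq hull_inc)

lemma real_point_in_newton_inf: "x \<in> supp2 f \<Longrightarrow> real_point x \<in> newton_inf f"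
  by (simp add: newton_inf_eq hull_inc)

lemma newton_inf_neq_0:
  assumes "quasi_convenient f" shows "newton_inf f \<noteq> {0}"
proof -
  obtain x where x: "x \<in> supp2 f" and "fst x + snd x > 0"
    using assms by (auto simp: quasi_convenient_def pos_degree2_def)
  hence "real_point x \<noteq> 0" by (auto simp: real_point_def prod_eq_iff)
  thus ?thesis using real_point_in_newton_inf[OF x] by blast
qed

lemma supp2_sum_in_newton_inf_mult:
  assumes x: "x \<in> supp2 f" and y: "y \<in> supp2 g"
  shows "real_point x + real_point y \<in> newton_inf (f * g)"
proof (rule ccontr)
  let ?D = "newton_inf (f * g)"
  assume "real_point x + real_point y \<notin> ?D"
  then obtain a b where ab: "inner a (real_point x + real_point y) < b" "\<forall>z\<in>?D. b < inner a z"
    using separating_hyperplane_closed_point[OF convex_newton_inf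
        compact_imp_closed[OF compact_newton_inf]] by blast
  define W where "W z = - inner a (real_point z)" for z
  have W_add: "W (fst z + fst w, snd z + snd w) = W z + W w" for z w
    by (simp add: W_def real_point_add inner_add_right)
  have "supp2 f \<noteq> {}" "supp2 g \<noteq> {}" using x y by auto
  then obtain s t where s: "lex_top W (supp2 f) s" and t: "lex_top W (supp2 g) t"
    using lex_top_exists[OF finite_supp2] by metis
  have "real_point (fst s + fst t, snd s + snd t) \<in> ?D"
    using lex_top_sum_in_supp2_mult[OF W_add s t] by (rule real_point_in_newton_inf)
  hence "W s + W t < - b" using ab(2) W_add[of s t] by (fastforce simp: W_def)
  moreover have "W x \<le> W s" "W y \<le> W t" using s t x y by (auto simp: lex_top_def)
  ultimately show False using ab(1) by (simp add: W_def inner_add_right)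
qed

text \<open>The weights are \<open>1/k\<close>, \<open>s/k\<close> and \<open>t/k\<close> with \<open>k = 1 + s + t\<close>.\<close>
lemma in_convex_hull_zero_translates:
  fixes p a b :: "'a::real_vector"
  assumes "s \<ge> 0" "t \<ge> 0" "p = s *\<^sub>R a + t *\<^sub>R b"
  shows "p \<in> convex hull {0, p + a, p + b}"
proof -
  define k where "k = 1 + s + t"
  have k: "k > 0" using assms by (simp add: k_def)
  have "p = (1 / k) *\<^sub>R (k *\<^sub>R p)" using k by simp
  also have "k *\<^sub>R p = s *\<^sub>R (p + a) + t *\<^sub>R (p + b)"
    using assms(3) by (simp add: k_def algebra_simps)
  finally have "p = (1 / k) *\<^sub>R 0 + (s / k) *\<^sub>R (p + a) + (t / k) *\<^sub>R (p + b)"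
    by (simp add: scaleR_add_right)
  moreover have "1 / k + s / k + t / k = 1"
    using k unfolding k_def by (simp add: add_divide_distrib[symmetric])
  moreover have "0 \<le> 1 / k" "0 \<le> s / k" "0 \<le> t / k" using assms(1,2) k by simp_all
  ultimately show ?thesis unfolding convex_hull_3 by blast
qed

lemma supp2_in_newton_inf_mult:
  assumes g: "quasi_convenient g" and x: "x \<in> supp2 f"
  shows "real_point x \<in> newton_inf (f * g)"
proof -
  let ?D = "newton_inf (f * g)"
  obtain \<alpha> \<beta> where \<alpha>: "(\<alpha>, 0) \<in> supp2 g" and \<beta>: "(0, \<beta>) \<in> supp2 g"
    using g by (auto simp: quasi_convenient_def supp2_def)
  have u: "real_point x + (real \<alpha>, 0) \<in> ?D"
    using supp2_sum_in_newton_inf_mult[OF x \<alpha>] by (simp add: real_point_def)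
  have v: "real_point x + (0, real \<beta>) \<in> ?D"
    using supp2_sum_in_newton_inf_mult[OF x \<beta>] by (simp add: real_point_def)
  show ?thesis
  proof (cases "\<alpha> = 0 \<or> \<beta> = 0")
    case True
    thus ?thesis using u v by (metis add.right_neutral of_nat_0 zero_prod_def)
  next
    case False
    have "real_point x =
        (real (fst x) / real \<alpha>) *\<^sub>R (real \<alpha>, 0) + (real (snd x) / real \<beta>) *\<^sub>R (0, real \<beta>)"
      using False by (simp add: real_point_def)
    hence "real_point x \<in> convex hull {0, real_point x + (real \<alpha>, 0), real_point x + (0, real \<beta>)}"
      by (intro in_convex_hull_zero_translates[where s = "real (fst x) / real \<alpha>"
            and t = "real (snd x) / real \<beta>"]) auto
    moreover have "convex hull {0, real_point x + (real \<alpha>, 0), real_point x + (0, real \<beta>)} \<subseteq> ?D"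
      using u v zero_in_newton_inf convex_newton_inf by (intro hull_minimal) auto
    ultimately show ?thesis by blast
  qed
qed

lemma newton_inf_mult:
  assumes f: "quasi_convenient f" and g: "quasi_convenient g"
  shows "newton_inf (f * g) = newton_inf f + newton_inf g"
proof (rule subset_antisym)
  have "real_point r \<in> newton_inf f + newton_inf g" if fg: "r \<in> supp2 (f * g)" for r
  proof -
    obtain m n where r: "r = (m, n)" by fastforce
    then obtain i j where "i \<le> m" "j \<le> n" "(i, j) \<in> supp2 f" "(m - i, n - j) \<in> supp2 g"
      using supp2_mult_subset fg by blast
    hence "real_point (i, j) + real_point (m - i, n - j) \<in> newton_inf f + newton_inf g"
      by (intro set_plus_intro real_point_in_newton_inf)
    thus ?thesis using \<open>i \<le> m\<close> \<open>j \<le> n\<close> r by (simp add: real_point_def)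
  qed
  moreover have "0 \<in> newton_inf f + newton_inf g"
    by (metis add_0 set_plus_intro zero_in_newton_inf)
  ultimately have "insert 0 (real_point ` supp2 (f * g)) \<subseteq> newton_inf f + newton_inf g"
    by blast
  thus "newton_inf (f * g) \<subseteq> newton_inf f + newton_inf g"
    unfolding newton_inf_eq[of "f * g"]
    by (intro hull_minimal convex_set_plus convex_newton_inf)
next
  have "u + v \<in> newton_inf (f * g)"
    if "u \<in> insert 0 (real_point ` supp2 f)" "v \<in> insert 0 (real_point ` supp2 g)" for u v
    using that supp2_sum_in_newton_inf_mult supp2_in_newton_inf_mult[OF g]
      supp2_in_newton_inf_mult[OF f, of _ g] zero_in_newton_inf
    by (auto simp: mult.commute)
  hence "insert 0 (real_point ` supp2 f) + insert 0 (real_point ` supp2 g) \<subseteq> newton_inf (f * g)"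
    by (blast elim!: set_plus_elim)
  hence "convex hull (insert 0 (real_point ` supp2 f) + insert 0 (real_point ` supp2 g))
      \<subseteq> newton_inf (f * g)"
    by (intro hull_minimal convex_newton_inf)
  thus "newton_inf f + newton_inf g \<subseteq> newton_inf (f * g)"
    by (simp add: newton_inf_eq[of f] newton_inf_eq[of g] convex_hull_set_plus)
qed

section \<open>Areas of Minkowski sums of plane convex sets\<close>

lemma compact_set_plus:
  fixes S T :: "'a::real_normed_vector set"
  assumes "compact S" "compact T"
  shows "compact (S + T)"
proof -
  have "S + T = {x + y |x y. x \<in> S \<and> y \<in> T}" by (auto simp: set_plus_def)
  thus ?thesis using compact_sums[OF assms] by simp
qed

lemma measure_lborel_compact: "compact S \<Longrightarrow> measure lborel S = measure lebesgue S"
  by (simp add: borel_compact)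

lemma emeasure_lborel_compact:
  assumes "compact S"
  shows "emeasure lborel S = ennreal (measure lebesgue S)"
proof -
  have "emeasure lborel S \<noteq> \<infinity>"
    using fmeasurable_compact[OF assms] by (auto simp: fmeasurable_def)
  thus ?thesis by (simp add: emeasure_eq_ennreal_measure measure_lborel_compact[OF assms])
qed

text \<open>One-dimensional Brunn--Minkowski: the translates \<open>max X + Y\<close> and \<open>X + min Y\<close>
  lie in \<open>X + Y\<close> and overlap in a single point.\<close>
lemma measure_set_plus_ge_1d:
  fixes X Y :: "real set"
  assumes X: "compact X" "X \<noteq> {}" and Y: "compact Y" "Y \<noteq> {}"
  shows "measure lebesgue X + measure lebesgue Y \<le> measure lebesgue (X + Y)"
proof -
  obtain m where m: "m \<in> X" "\<forall>x\<in>X. x \<le> m" using compact_attains_sup[OF X] by blast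
  obtain n where n: "n \<in> Y" "\<forall>y\<in>Y. n \<le> y" using compact_attains_inf[OF Y] by blast
  define U where "U = (+) n ` X"
  define V where "V = (+) m ` Y"
  have U: "U \<in> lmeasurable" "measure lebesgue U = measure lebesgue X"
    using X by (simp_all add: U_def lmeasurable_compact compact_translation measure_translation)
  have V: "V \<in> lmeasurable" "measure lebesgue V = measure lebesgue Y"
    using Y by (simp_all add: V_def lmeasurable_compact compact_translation measure_translation)
  have "U \<inter> V \<subseteq> {m + n}" using m n by (force simp: U_def V_def)
  hence "measure lebesgue (U \<inter> V) = 0"
    by (intro negligible_imp_measure0 negligible_subset[OF negligible_sing])
  hence "measure lebesgue (U \<union> V) = measure lebesgue X + measure lebesgue Y"
    using measure_Un3[OF U(1) V(1)] U(2) V(2) by simp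
  moreover have "U \<union> V \<subseteq> X + Y"
    using m(1) n(1) by (auto simp: U_def V_def add.commute[of n] intro: set_plus_intro)
  ultimately show ?thesis
    using U(1) V(1) compact_set_plus[OF X(1) Y(1)]
    by (metis fmeasurable.Un lmeasurable_compact measure_mono_fmeasurable fmeasurableD)
qed

lemma compact_slice:
  fixes S :: "('a::real_normed_vector \<times> 'b::real_normed_vector) set"
  assumes "compact S"
  shows "compact (Pair t -` S)"
proof -
  have "Pair t -` S = snd ` (S \<inter> {t} \<times> UNIV)" by force
  moreover have "compact (S \<inter> {t} \<times> UNIV)"
    using assms by (intro compact_Int_closed closed_Times) auto
  ultimately show ?thesis
    by (metis compact_continuous_image continuous_on_snd[OF continuous_on_id])
qed

lemma slice_set_plus_subset: "Pair t -` A + Pair r -` B \<subseteq> Pair (t + r) -` (A + B)"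
proof
  fix z assume "z \<in> Pair t -` A + Pair r -` B"
  then obtain y y' where "(t, y) \<in> A" "(r, y') \<in> B" "z = y + y'" by (auto elim: set_plus_elim)
  moreover from this have "(t, y) + (r, y') \<in> A + B" by (intro set_plus_intro)
  ultimately show "z \<in> Pair (t + r) -` (A + B)" by simp
qed

lemma measure_slice_set_plus_ge:
  fixes A B :: "(real \<times> real) set"
  assumes "compact A" "compact B" "t \<in> fst ` A" "r \<in> fst ` B"
  shows "measure lebesgue (Pair t -` A) + measure lebesgue (Pair r -` B)
    \<le> measure lebesgue (Pair (t + r) -` (A + B))"
proof -
  have ne: "Pair t -` A \<noteq> {}" "Pair r -` B \<noteq> {}"
    using assms(3,4) by (auto simp: image_iff)
  have c: "compact (Pair t -` A)" "compact (Pair r -` B)" "compact (Pair (t + r) -` (A + B))"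
    using assms by (simp_all add: compact_slice compact_set_plus)
  have "measure lebesgue (Pair t -` A) + measure lebesgue (Pair r -` B)
      \<le> measure lebesgue (Pair t -` A + Pair r -` B)"
    using measure_set_plus_ge_1d c(1,2) ne by blast
  also have "\<dots> \<le> measure lebesgue (Pair (t + r) -` (A + B))"
    by (intro measure_mono_fmeasurable[OF slice_set_plus_subset]
        fmeasurableD lmeasurable_compact compact_set_plus c)
  finally show ?thesis .
qed

lemma
  fixes S :: "(real \<times> real) set"
  assumes "S \<in> sets borel"
  shows emeasure_lborel_eq_slices:
      "emeasure lborel S = (\<integral>\<^sup>+t. emeasure lborel (Pair t -` S) \<partial>lborel)"
    and measurable_emeasure_slice:
      "(\<lambda>t. emeasure lborel (Pair t -` S)) \<in> borel_measurable borel"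
proof -
  have S: "S \<in> sets (lborel \<Otimes>\<^sub>M lborel)" by (subst lborel_prod) (simp add: assms)
  show "emeasure lborel S = (\<integral>\<^sup>+t. emeasure lborel (Pair t -` S) \<partial>lborel)"
    using lborel.emeasure_pair_measure_alt[OF S] by (simp add: lborel_prod)
  show "(\<lambda>t. emeasure lborel (Pair t -` S)) \<in> borel_measurable borel"
    using lborel.measurable_emeasure_Pair[OF S] by simp
qed

text \<open>The right-hand side is the mean length of the vertical slices of \<open>A\<close> over
  \<open>[a, a + d]\<close>, with the interval rescaled to \<open>[0, 1]\<close>.\<close>
lemma mean_slice_measure:
  fixes A :: "(real \<times> real) set"
  assumes A: "compact A" and proj: "fst ` A \<subseteq> {a..a + d}" and d: "d > 0"
  shows "ennreal (measure lebesgue A / d) =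
    (\<integral>\<^sup>+l. indicator {0..1} l * emeasure lborel (Pair (a + d * l) -` A) \<partial>lborel)"
proof -
  note [measurable] = measurable_emeasure_slice[OF borel_compact[OF A]]
  have slices_vanish: "Pair (a + d * l) -` A = {}" if "l \<notin> {0..1}" for l
  proof -
    have "a + d * l < a \<or> a + d < a + d * l" using that d by (auto simp: mult_less_0_iff)
    hence "a + d * l \<notin> fst ` A" using proj by auto
    thus ?thesis by (auto intro: rev_image_eqI)
  qed
  let ?I = "\<integral>\<^sup>+l. indicator {0..1} l * emeasure lborel (Pair (a + d * l) -` A) \<partial>lborel"
  have "ennreal (measure lebesgue A) = (\<integral>\<^sup>+t. emeasure lborel (Pair t -` A) \<partial>lborel)"
    using emeasure_lborel_compact[OF A] emeasure_lborel_eq_slices[OF borel_compact[OF A]] by simp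
  also have "\<dots> = ennreal \<bar>d\<bar> * (\<integral>\<^sup>+l. emeasure lborel (Pair (a + d * l) -` A) \<partial>lborel)"
    using d by (intro nn_integral_real_affine) auto
  also have "(\<integral>\<^sup>+l. emeasure lborel (Pair (a + d * l) -` A) \<partial>lborel) = ?I"
    by (intro nn_integral_cong) (auto simp: slices_vanish indicator_def)
  finally have m: "ennreal (measure lebesgue A) = ennreal d * ?I" using d by simp
  have "ennreal (measure lebesgue A / d) = ennreal (1 / d) * ennreal (measure lebesgue A)"
    using d by (subst ennreal_mult[symmetric]) auto
  also have "\<dots> = ennreal (1 / d) * ennreal d * ?I" by (simp add: m mult.assoc)
  also have "ennreal (1 / d) * ennreal d = 1" using d by (simp flip: ennreal_mult)
  finally show ?thesis by simp
qed

lemma mean_slice_measure_set_plus: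
  fixes A B :: "(real \<times> real) set"
  assumes A: "compact A" "fst ` A = {a..a + da}" "da > 0"
    and B: "compact B" "fst ` B = {b..b + db}" "db > 0"
  shows "measure lebesgue A / da + measure lebesgue B / db \<le> measure lebesgue (A + B) / (da + db)"
proof -
  have AB: "compact (A + B)" using A B by (simp add: compact_set_plus)
  have "fst ` (A + B) \<subseteq> {a + b..a + b + (da + db)}"
  proof
    fix z assume "z \<in> fst ` (A + B)"
    then obtain x y where "x \<in> A" "y \<in> B" "z = fst x + fst y" by (auto elim!: set_plus_elim)
    thus "z \<in> {a + b..a + b + (da + db)}" using A(2) B(2) by force
  qed
  note [measurable] = measurable_emeasure_slice[OF borel_compact[OF A(1)]]
    measurable_emeasure_slice[OF borel_compact[OF B(1)]]
    measurable_emeasure_slice[OF borel_compact[OF AB]]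
  have slices: "indicator {0..1} l * emeasure lborel (Pair (a + da * l) -` A)
      + indicator {0..1} l * emeasure lborel (Pair (b + db * l) -` B)
      \<le> indicator {0..1} l * emeasure lborel (Pair (a + b + (da + db) * l) -` (A + B))" for l
  proof (cases "l \<in> {0..1}")
    case True
    have "a + da * l \<in> fst ` A" "b + db * l \<in> fst ` B"
      using True A(2,3) B(2,3) by (auto simp: mult_left_le)
    from measure_slice_set_plus_ge[OF A(1) B(1) this]
    have "measure lebesgue (Pair (a + da * l) -` A) + measure lebesgue (Pair (b + db * l) -` B)
        \<le> measure lebesgue (Pair (a + b + (da + db) * l) -` (A + B))"
      by (simp add: algebra_simps)
    thus ?thesis using True A(1) B(1) AB
      by (simp add: emeasure_lborel_compact compact_slice ennreal_plus[symmetric] del: ennreal_plus)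
  qed simp
  have "ennreal (measure lebesgue A / da + measure lebesgue B / db)
      = ennreal (measure lebesgue A / da) + ennreal (measure lebesgue B / db)"
    using A(3) B(3) by (simp add: ennreal_plus)
  also have "\<dots> \<le> ennreal (measure lebesgue (A + B) / (da + db))"
    unfolding mean_slice_measure[OF A(1) equalityD1[OF A(2)] A(3)]
      mean_slice_measure[OF B(1) equalityD1[OF B(2)] B(3)]
      mean_slice_measure[OF AB \<open>fst ` (A + B) \<subseteq> _\<close> add_pos_pos[OF A(3) B(3)]]
    by (subst nn_integral_add[symmetric]) (auto intro!: nn_integral_mono slices)
  finally show ?thesis using A(3) B(3) by (subst (asm) ennreal_le_iff) auto
qed

lemma fst_image_compact_convex:
  fixes A :: "(real \<times> real) set"
  assumes "compact A" "convex A"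
  obtains a a' where "fst ` A = {a..a'}"
proof -
  have "compact (fst ` A)"
    using assms(1) by (intro compact_continuous_image continuous_on_fst continuous_on_id)
  moreover have "connected (fst ` A)"
    using assms(2) by (intro convex_connected convex_linear_image linear_fst)
  ultimately show thesis using that connected_compact_interval_1 by metis
qed

text \<open>If \<open>A\<close> and \<open>B\<close> project onto intervals of lengths \<open>d\<^sub>A, d\<^sub>B > 0\<close>, averaging
  one-dimensional Brunn--Minkowski over the slices gives
  \<open>|A + B| \<ge> (d\<^sub>A + d\<^sub>B) (|A|/d\<^sub>A + |B|/d\<^sub>B)
    = |A| + |B| + (d\<^sub>B/d\<^sub>A) |A| + (d\<^sub>A/d\<^sub>B) |B|\<close>.\<close>
lemma measure_set_plus_gt_fst:
  fixes A B :: "(real \<times> real) set"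
  assumes A: "compact A" "convex A" "measure lebesgue A > 0"
    and B: "compact B" "convex B" "b \<in> B" "b' \<in> B" "fst b \<noteq> fst b'"
  shows "measure lebesgue A + measure lebesgue B < measure lebesgue (A + B)"
proof -
  obtain a a' where a: "fst ` A = {a..a'}" using fst_image_compact_convex A(1,2) by blast
  obtain c c' where c: "fst ` B = {c..c'}" using fst_image_compact_convex B(1,2) by blast
  have "a < a'"
  proof (rule ccontr)
    assume "\<not> a < a'"
    hence "A \<subseteq> {x. inner (1, 0) x = a}" using a by force
    moreover have "negligible {x. inner (1::real, 0::real) x = a}"
      by (rule negligible_hyperplane) (simp add: zero_prod_def)
    ultimately have "negligible A" using negligible_subset by blast
    thus False using A(3) negligible_imp_measure0 by force
  qed
  moreover have "c < c'"
  proof -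
    have "fst b \<in> {c..c'}" "fst b' \<in> {c..c'}" using c B(3,4) by blast+
    thus ?thesis using B(5) by auto
  qed
  moreover define da db where "da = a' - a" and "db = c' - c"
  ultimately have da: "da > 0" "a' = a + da" and db: "db > 0" "c' = c + db" by simp_all
  define \<mu>A \<mu>B \<mu>AB where "\<mu>A = measure lebesgue A" and "\<mu>B = measure lebesgue B"
    and "\<mu>AB = measure lebesgue (A + B)"
  have "\<mu>A / da + \<mu>B / db \<le> \<mu>AB / (da + db)"
    unfolding \<mu>A_def \<mu>B_def \<mu>AB_def
    using a c da db by (intro mean_slice_measure_set_plus A(1) B(1)) simp_all
  hence "(da + db) * (\<mu>A / da + \<mu>B / db) \<le> \<mu>AB"
    using da db by (simp add: le_divide_eq mult.commute)
  moreover have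
    "(da + db) * (\<mu>A / da + \<mu>B / db) = \<mu>A + \<mu>B + (db / da * \<mu>A + da / db * \<mu>B)"
    using da db by (simp add: field_simps)
  moreover have "db / da * \<mu>A > 0" "da / db * \<mu>B \<ge> 0"
    using da db A(3) by (simp_all add: \<mu>A_def \<mu>B_def)
  ultimately show ?thesis unfolding \<mu>A_def \<mu>B_def \<mu>AB_def by linarith
qed

lemma image_set_plus_additive:
  assumes "\<And>x y. f (x + y) = f x + f y"
  shows "f ` (A + B) = f ` A + f ` B"
proof -
  have "f ` (A + B) = {f (a + b) |a b. a \<in> A \<and> b \<in> B}" unfolding set_plus_def by blast
  also have "\<dots> = {f a + f b |a b. a \<in> A \<and> b \<in> B}" by (simp add: assms)
  also have "\<dots> = f ` A + f ` B" unfolding set_plus_def by blast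
  finally show ?thesis .
qed

lemma measure_swap_image:
  fixes S :: "(real \<times> real) set"
  assumes S: "compact S"
  shows "measure lebesgue (prod.swap ` S) = measure lebesgue S"
proof -
  have S': "S \<in> sets (lborel \<Otimes>\<^sub>M lborel)" by (subst lborel_prod) (simp add: borel_compact S)
  have swap: "(\<lambda>(x, y). (y, x)) = prod.swap" by (simp add: fun_eq_iff)
  have "prod.swap ` S = prod.swap -` S" by force
  hence "emeasure lborel (prod.swap ` S) = emeasure (lborel \<Otimes>\<^sub>M lborel) (prod.swap -` S)"
    by (simp add: lborel_prod)
  also have "\<dots> = emeasure (distr (lborel \<Otimes>\<^sub>M lborel) (lborel \<Otimes>\<^sub>M lborel) prod.swap) S"
    using emeasure_distr[OF measurable_pair_swap' S'] by (simp add: swap space_pair_measure)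
  also have "\<dots> = emeasure lborel S"
    by (simp only: lborel_pair.distr_pair_swap[symmetric, unfolded swap]) (simp add: lborel_prod)
  finally show ?thesis
    using S by (simp add: emeasure_lborel_compact compact_continuous_image continuous_on_swap)
qed

lemma measure_set_plus_gt:
  fixes A B :: "(real \<times> real) set"
  assumes A: "compact A" "convex A" "measure lebesgue A > 0"
    and B: "compact B" "convex B" "b \<in> B" "b' \<in> B" "b \<noteq> b'"
  shows "measure lebesgue A + measure lebesgue B < measure lebesgue (A + B)"
proof (cases "fst b = fst b'")
  case False
  thus ?thesis using measure_set_plus_gt_fst[OF A B(1-4)] by blast
next
  case True
  hence "fst (prod.swap b) \<noteq> fst (prod.swap b')" using B(5) by (simp add: prod_eq_iff)
  moreover have "compact (prod.swap ` S)" "convex (prod.swap ` S)"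
    if "compact S" "convex S" for S :: "(real \<times> real) set"
    using that by (auto intro: compact_continuous_image continuous_on_swap convex_linear_image
        simp: linear_iff)
  ultimately have "measure lebesgue (prod.swap ` A) + measure lebesgue (prod.swap ` B)
      < measure lebesgue (prod.swap ` A + prod.swap ` B)"
    using A B by (intro measure_set_plus_gt_fst[where b = "prod.swap b" and b' = "prod.swap b'"])
        (auto simp: measure_swap_image)
  moreover have "prod.swap ` A + prod.swap ` B = prod.swap ` (A + B)"
    by (rule image_set_plus_additive[symmetric]) (simp add: prod.swap_def)
  ultimately show ?thesis
    using A B by (simp add: measure_swap_image compact_set_plus)
qed

lemma collinear_iff_subset_span_singleton:
  fixes S :: "'a::{perfect_space, real_vector} set"
  assumes "0 \<in> S"
  shows "collinear S \<longleftrightarrow> (\<exists>v. v \<noteq> 0 \<and> S \<subseteq> span {v})"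
proof
  assume "collinear S"
  then obtain v where "v \<noteq> 0" "\<forall>x\<in>S. \<forall>y\<in>S. \<exists>c. x - y = c *\<^sub>R v"
    unfolding collinear by blast
  thus "\<exists>v. v \<noteq> 0 \<and> S \<subseteq> span {v}"
    using assms by (metis diff_zero span_singleton rangeI subsetI)
next
  assume "\<exists>v. v \<noteq> 0 \<and> S \<subseteq> span {v}"
  then obtain v where "S \<subseteq> span {v}" by blast
  hence "\<exists>c. x - y = c *\<^sub>R v" if "x \<in> S" "y \<in> S" for x y
    using that span_diff[of x "{v}" y] by (auto simp: span_singleton)
  thus "collinear S" unfolding collinear_def by blast
qed

lemma negligible_convex_imp_collinear:
  fixes S :: "(real \<times> real) set"
  assumes "convex S" "negligible S"
  shows "collinear S"
proof (cases "S = {}")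
  case False
  have "interior S = {}" using assms negligible_convex_interior by blast
  hence "aff_dim S \<noteq> int DIM(real \<times> real)"
    using False assms(1) by (metis interior_rel_interior_gen rel_interior_eq_empty)
  thus ?thesis using aff_dim_le_DIM[of S] by (simp add: collinear_aff_dim)
qed simp

lemma negligible_subset_span_singleton:
  fixes S :: "(real \<times> real) set"
  assumes "S \<subseteq> span {v}"
  shows "negligible S"
proof -
  have "dim (span {v}) < DIM(real \<times> real)" by (simp add: dim_span)
  thus ?thesis using assms negligible_lowdim negligible_subset by blast
qed

lemma measure_set_plus_ge:
  fixes A B :: "(real \<times> real) set"
  assumes A: "compact A" "convex A" "0 \<in> A" and B: "compact B" "convex B" "0 \<in> B"
  shows "measure lebesgue A + measure lebesgue B \<le> measure lebesgue (A + B)"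
proof -
  have AB: "A + B \<in> lmeasurable" using A B by (simp add: lmeasurable_compact compact_set_plus)
  have sub: "A \<subseteq> A + B" "B \<subseteq> A + B"
    using set_zero_plus2[OF B(3), of A] set_zero_plus2[OF A(3), of B] by (simp_all add: add.commute)
  have mono: "measure lebesgue A \<le> measure lebesgue (A + B)"
      "measure lebesgue B \<le> measure lebesgue (A + B)"
    using sub A(1) B(1) AB by (auto intro!: measure_mono_fmeasurable fmeasurableD lmeasurable_compact)
  show ?thesis
  proof (cases "measure lebesgue A = 0 \<or> measure lebesgue B = 0")
    case True thus ?thesis using mono by auto
  next
    case False
    hence "B \<noteq> {0}" by auto
    then obtain b where "b \<in> B" "b \<noteq> 0" using B(3) by blast
    moreover have "measure lebesgue A > 0" using False measure_nonneg[of lebesgue A] by linarith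
    ultimately show ?thesis using measure_set_plus_gt[OF A(1,2) _ B(1,2) _ B(3)] by fastforce
  qed
qed

lemma measure_set_plus_eq_iff_collinear:
  fixes A B :: "(real \<times> real) set"
  assumes A: "compact A" "convex A" "0 \<in> A" "A \<noteq> {0}"
    and B: "compact B" "convex B" "0 \<in> B" "B \<noteq> {0}"
  shows "measure lebesgue (A + B) = measure lebesgue A + measure lebesgue B \<longleftrightarrow>
    collinear (A \<union> B)"
proof
  assume eq: "measure lebesgue (A + B) = measure lebesgue A + measure lebesgue B"
  obtain a where a: "a \<in> A" "a \<noteq> 0" using A(3,4) by blast
  obtain b where b: "b \<in> B" "b \<noteq> 0" using B(3,4) by blast
  have "\<not> measure lebesgue A > 0"
    using measure_set_plus_gt[OF A(1,2) _ B(1,2) b(1) B(3) b(2)] eq by auto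
  moreover have "\<not> measure lebesgue B > 0"
    using measure_set_plus_gt[OF B(1,2) _ A(1,2) a(1) A(3) a(2)] eq by (auto simp: add.commute)
  ultimately have "measure lebesgue A = 0" "measure lebesgue B = 0"
    using measure_nonneg[of lebesgue A] measure_nonneg[of lebesgue B] by linarith+
  hence "negligible (A + B)"
    using eq A B by (simp add: negligible_iff_measure0 lmeasurable_compact compact_set_plus)
  hence "collinear (A + B)"
    using A(2) B(2) by (intro negligible_convex_imp_collinear convex_set_plus)
  moreover have "A \<union> B \<subseteq> A + B"
    using set_zero_plus2[OF B(3), of A] set_zero_plus2[OF A(3), of B] by (simp add: add.commute)
  ultimately show "collinear (A \<union> B)" by (rule collinear_subset)
next
  assume "collinear (A \<union> B)"
  then obtain v where "A \<union> B \<subseteq> span {v}"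
    using A(3) collinear_iff_subset_span_singleton[of "A \<union> B"] by blast
  moreover from this have "A + B \<subseteq> span {v}" by (blast elim!: set_plus_elim intro: span_add)
  ultimately have "negligible A" "negligible B" "negligible (A + B)"
    using negligible_subset_span_singleton by blast+
  thus "measure lebesgue (A + B) = measure lebesgue A + measure lebesgue B"
    by (simp add: negligible_imp_measure0)
qed

lemma collinear_Un_iff_segments_on_line:
  fixes A B :: "(real \<times> real) set"
  assumes A: "compact A" "convex A" "0 \<in> A" and B: "compact B" "convex B" "0 \<in> B"
  shows "collinear (A \<union> B) \<longleftrightarrow>
    (\<exists>v. v \<noteq> 0 \<and> A \<subseteq> span {v} \<and> B \<subseteq> span {v} \<and>
      (\<exists>p q. A = closed_segment p q) \<and> (\<exists>p q. B = closed_segment p q))"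
proof
  assume col: "collinear (A \<union> B)"
  then obtain v where "v \<noteq> 0" "A \<union> B \<subseteq> span {v}"
    using A(3) collinear_iff_subset_span_singleton[of "A \<union> B"] by blast
  moreover have "\<exists>p q. A = closed_segment p q" "\<exists>p q. B = closed_segment p q"
    using col A B
    by (metis collinear_subset compact_convex_collinear_segment empty_iff sup_ge1 sup_ge2)+
  ultimately show "\<exists>v. v \<noteq> 0 \<and> A \<subseteq> span {v} \<and> B \<subseteq> span {v} \<and>
      (\<exists>p q. A = closed_segment p q) \<and> (\<exists>p q. B = closed_segment p q)" by blast
next
  assume "\<exists>v. v \<noteq> 0 \<and> A \<subseteq> span {v} \<and> B \<subseteq> span {v} \<and>
      (\<exists>p q. A = closed_segment p q) \<and> (\<exists>p q. B = closed_segment p q)"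
  thus "collinear (A \<union> B)"
    using A(3) collinear_iff_subset_span_singleton[of "A \<union> B"] by blast
qed

theorem lemma3p2:
  fixes f g :: cpoly2
  assumes "quasi_convenient f" and "quasi_convenient g"
  shows "nu_inf f g \<ge> 0 \<and>
    (nu_inf f g = 0 \<longleftrightarrow>
      (\<exists>v :: real \<times> real. v \<noteq> 0 \<and>
         newton_inf f \<subseteq> span {v} \<and> newton_inf g \<subseteq> span {v} \<and>
         (\<exists>p q. newton_inf f = closed_segment p q) \<and>
         (\<exists>p q. newton_inf g = closed_segment p q)))"
proof -
  note A = compact_newton_inf[of f] convex_newton_inf[of f] zero_in_newton_inf[of f]
  note B = compact_newton_inf[of g] convex_newton_inf[of g] zero_in_newton_inf[of g]
  have nu: "nu_inf f g = measure lebesgue (newton_inf f + newton_inf g)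
      - measure lebesgue (newton_inf f) - measure lebesgue (newton_inf g)"
    using A(1) B(1) by (simp add: nu_inf_def area_def newton_inf_mult[OF assms]
        measure_lborel_compact compact_set_plus)
  show ?thesis
    unfolding nu collinear_Un_iff_segments_on_line[OF A B, symmetric]
      measure_set_plus_eq_iff_collinear[OF A newton_inf_neq_0[OF assms(1)] B
        newton_inf_neq_0[OF assms(2)], symmetric]
    using measure_set_plus_ge[OF A B] by linarith
qed

end
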